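(* Let $\psi\in\mathcal K$ have radius of convergence $R_\psi>0$ and Khinchin family $(Y_t)$. For $t\in(0,R_\psi)$ let $q(t)$ be the extinction probability of the Galton–Watson process with offspring distribution $Y_t$, and $q(0)=1$. Then $q$ is continuous on $[0,R_\psi)$.
   Context: $\mathcal K$ is the class of non-constant power series $f(z)=\sum_{n\ge0}a_nz^n$ with positive radius of convergence $R$, non-negative coefficients and $a_0>0$; its Khinchin family $(X_t)_{t\in[0,R)}$ is given by $\mathbf P(X_t=n)=a_nt^n/f(t)$ for $n\ge0$, $t\in(0,R)$, and $X_0\equiv0$ (so the process with offspring $Y_0$ is a single node and goes extinct, consistently with $q(0)=1$). The extinction probability is the probability that the Galton–Watson tree is finite. *)

theory Defs
  imports "HOL-Analysis.Analysis" "HOL-Probability.Probability_Mass_Function"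
begin

definition in_class_K :: "(nat \<Rightarrow> real) \<Rightarrow> bool" where
  "in_class_K a \<longleftrightarrow> (\<forall>n. a n \<ge> 0) \<and> a 0 > 0 \<and> (\<exists>n>0. a n \<noteq> 0)
     \<and> conv_radius a > 0"

definition pseries :: "(nat \<Rightarrow> real) \<Rightarrow> real \<Rightarrow> real" where
  "pseries a t = (\<Sum>n. a n * t ^ n)"

text \<open>Khinchin family: P(X_t = n) = a_n t^n / f(t) (for t = 0 this is the point mass at 0).\<close>
definition khinchin :: "(nat \<Rightarrow> real) \<Rightarrow> real \<Rightarrow> nat pmf" where
  "khinchin a t = embed_pmf (\<lambda>n. a n * t ^ n / pseries a t)"

fun iid_sum_pmf :: "nat pmf \<Rightarrow> nat \<Rightarrow> nat pmf" where
  "iid_sum_pmf p 0 = return_pmf 0"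
| "iid_sum_pmf p (Suc k) = bind_pmf p (\<lambda>x. map_pmf (\<lambda>y. x + y) (iid_sum_pmf p k))"

fun gw_generation :: "nat pmf \<Rightarrow> nat \<Rightarrow> nat pmf" where
  "gw_generation p 0 = return_pmf 1"
| "gw_generation p (Suc n) = bind_pmf (gw_generation p n) (iid_sum_pmf p)"

text \<open>Extinction probability: probability that the tree is finite, i.e. that some
  generation is empty: P(\<Union>n. {Z_n = 0}) = lim P(Z_n = 0) (increasing events).\<close>
definition extinction_prob :: "nat pmf \<Rightarrow> real" where
  "extinction_prob p = lim (\<lambda>n. pmf (gw_generation p n) 0)"

end

theory Submission
  imports Defs
begin

text \<open>
  Let \<open>g\<^sub>t(s) = \<psi>(t s) / \<psi>(t)\<close> be the probability generating function of \<open>Y\<^sub>t\<close>.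
  Generating functions turn the Galton--Watson recursion into iteration:
  \<open>P(Z\<^sub>n = 0) = g\<^sub>t\<^sup>n(0)\<close>, so \<open>q(t)\<close> is the increasing limit of \<open>g\<^sub>t\<^sup>n(0)\<close>, the least fixed
  point of \<open>g\<^sub>t\<close> in \<open>[0, 1]\<close>; the case \<open>t = 0\<close> fits because \<open>g\<^sub>0 = 1\<close>.
  Every \<open>t \<mapsto> g\<^sub>t\<^sup>n(0)\<close> is continuous, so \<open>q\<close> is lower semicontinuous.
  For upper semicontinuity let \<open>q(t\<^sub>0) < s < 1\<close>. The power series \<open>g\<^sub>t\<^sub>0\<close> with nonnegative
  coefficients fixes \<open>q(t\<^sub>0)\<close> and \<open>1\<close>; since \<open>g\<^sub>t\<^sub>0(0) > 0\<close> it is not affine, hence strictly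
  convex, which forces \<open>g\<^sub>t\<^sub>0(s) < s\<close>.
  By continuity \<open>g\<^sub>t(s) < s\<close> for \<open>t\<close> near \<open>t\<^sub>0\<close>, and then \<open>q(t) \<le> s\<close>.
\<close>

lemma isCont_pseries:
  assumes "ereal \<bar>x\<bar> < conv_radius a"
  shows "isCont (pseries a) x"
proof -
  obtain r where r: "ereal \<bar>x\<bar> < ereal r" "ereal r < conv_radius a"
    using ereal_dense2[OF assms] by blast
  then have "summable (\<lambda>n. a n * r ^ n)" "norm x < norm r"
    using summable_in_conv_radius[of r a] by auto
  then show ?thesis
    unfolding pseries_def[abs_def] by (rule isCont_powser)
qed

lemma continuous_on_pseries: "continuous_on {x. ereal \<bar>x\<bar> < conv_radius a} (pseries a)"
  by (intro continuous_at_imp_continuous_on ballI isCont_pseries) simp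

lemma pseries_zero [simp]: "pseries a 0 = a 0"
  unfolding pseries_def by (rule powser_zero)

lemma pseries_mono:
  assumes "\<And>n. 0 \<le> a n" "0 \<le> x" "x \<le> y" "ereal y < conv_radius a"
  shows "pseries a x \<le> pseries a y"
proof -
  have "ereal (norm x) < conv_radius a" "ereal (norm y) < conv_radius a"
    using assms by (auto intro: le_less_trans[of _ "ereal y"])
  then have "summable (\<lambda>n. a n * x ^ n)" "summable (\<lambda>n. a n * y ^ n)"
    by (auto intro: summable_in_conv_radius)
  then show ?thesis
    unfolding pseries_def using assms
    by (intro suminf_le) (auto intro!: mult_left_mono power_mono)
qed

lemma abs_mult_less_conv_radius:
  assumes "0 \<le> t" "ereal t < conv_radius a" "s \<in> {0..1}"
  shows "ereal \<bar>t * s\<bar> < conv_radius a"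
proof -
  have "\<bar>t * s\<bar> \<le> t"
    using assms by (simp add: abs_mult mult_left_le)
  then show ?thesis
    using assms(2) by (auto intro: le_less_trans[of _ "ereal t"])
qed

(* A nonnegative integral rather than an expectation, so that it passes through bind_pmf
   without integrability side conditions; it is finite on [0, 1]. *)
definition pgf :: "nat pmf \<Rightarrow> real \<Rightarrow> real" where
  "pgf p s = enn2real (\<integral>\<^sup>+ k. ennreal (s ^ k) \<partial>measure_pmf p)"

lemma nn_integral_power_le_one:
  assumes "s \<in> {0..1}"
  shows "(\<integral>\<^sup>+ k. ennreal (s ^ k) \<partial>measure_pmf p) \<le> 1"
proof -
  have "(\<integral>\<^sup>+ k. ennreal (s ^ k) \<partial>measure_pmf p) \<le> (\<integral>\<^sup>+ k. 1 \<partial>measure_pmf p)"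
    using assms by (intro nn_integral_mono) (simp add: power_le_one)
  then show ?thesis
    by simp
qed

lemma nn_integral_power_eq_pgf:
  assumes "s \<in> {0..1}"
  shows "(\<integral>\<^sup>+ k. ennreal (s ^ k) \<partial>measure_pmf p) = ennreal (pgf p s)"
  using nn_integral_power_le_one[OF assms] unfolding pgf_def
  by (simp add: top.not_eq_extremum le_less_trans[OF _ ennreal_one_less_top])

lemma pgf_nonneg [simp]: "0 \<le> pgf p s"
  unfolding pgf_def by simp

lemma pgf_in_unit_interval:
  assumes "s \<in> {0..1}"
  shows "pgf p s \<in> {0..1}"
  using enn2real_mono[OF nn_integral_power_le_one[OF assms]] unfolding pgf_def by simp

lemma pgf_iid_sum_pmf:
  assumes s: "s \<in> {0..1}"
  shows "pgf (iid_sum_pmf p k) s = pgf p s ^ k"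
proof (induction k)
  case 0
  then show ?case
    unfolding pgf_def by simp
next
  case (Suc k)
  have "ennreal (pgf (iid_sum_pmf p (Suc k)) s)
      = (\<integral>\<^sup>+ x. ennreal (s ^ x) *
          (\<integral>\<^sup>+ y. ennreal (s ^ y) \<partial>measure_pmf (iid_sum_pmf p k)) \<partial>measure_pmf p)"
    using s
    by (simp add: nn_integral_power_eq_pgf[symmetric] power_add ennreal_mult nn_integral_cmult)
  also have "\<dots> = ennreal (pgf p s) * ennreal (pgf p s ^ k)"
    using s by (simp add: Suc nn_integral_power_eq_pgf nn_integral_multc)
  also have "\<dots> = ennreal (pgf p s ^ Suc k)"
    using pgf_in_unit_interval[OF s] by (simp add: ennreal_mult)
  finally show ?case
    using pgf_in_unit_interval[OF s] by simp
qed

lemma pgf_gw_generation: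
  assumes "s \<in> {0..1}"
  shows "pgf (gw_generation p n) s = (pgf p ^^ n) s"
  using assms
proof (induction n arbitrary: s)
  case 0
  then show ?case
    unfolding pgf_def by simp
next
  case (Suc n)
  have "ennreal (pgf (gw_generation p (Suc n)) s)
      = (\<integral>\<^sup>+ m. ennreal (pgf (iid_sum_pmf p m) s) \<partial>measure_pmf (gw_generation p n))"
    using Suc.prems by (simp add: nn_integral_power_eq_pgf[symmetric])
  also have "\<dots> = ennreal (pgf (gw_generation p n) (pgf p s))"
    using Suc.prems pgf_in_unit_interval[OF Suc.prems]
    by (simp add: pgf_iid_sum_pmf nn_integral_power_eq_pgf[symmetric])
  also have "\<dots> = ennreal ((pgf p ^^ Suc n) s)"
    using Suc.IH pgf_in_unit_interval[OF Suc.prems] by (simp only: funpow_Suc_right comp_def)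
  finally show ?case
    by (simp add: ennreal_inj)
qed

lemma pmf_zero_eq_pgf: "pmf p 0 = pgf p 0"
proof -
  have "(\<integral>\<^sup>+ k. ennreal (0 ^ k) \<partial>measure_pmf p) = (\<integral>\<^sup>+ k. indicator {0} k \<partial>measure_pmf p)"
    by (intro nn_integral_cong) (simp add: indicator_def)
  then show ?thesis
    unfolding pgf_def by (simp add: emeasure_pmf_single)
qed

lemma extinction_prob_eq_lim_pgf: "extinction_prob p = lim (\<lambda>n. (pgf p ^^ n) 0)"
  unfolding extinction_prob_def pmf_zero_eq_pgf by (simp add: pgf_gw_generation)

lemma funpow_in_invariant:
  assumes "f ` S \<subseteq> S" "x \<in> S"
  shows "(f ^^ n) x \<in> S"
  using assms by (induction n) auto

lemma funpow_cong_on_invariant: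
  assumes "\<And>x. x \<in> S \<Longrightarrow> f x = g x" "g ` S \<subseteq> S" "x \<in> S"
  shows "(f ^^ n) x = (g ^^ n) x"
  using assms funpow_in_invariant[OF assms(2,3)] by (induction n) auto

lemma funpow_zero_tendsto_least_fixpoint:
  fixes g :: "real \<Rightarrow> real"
  assumes mono: "mono_on {0..1} g" and maps: "g ` {0..1} \<subseteq> {0..1}"
    and cont: "continuous_on {0..1} g"
  defines "L \<equiv> lim (\<lambda>n. (g ^^ n) 0)"
  shows "(\<lambda>n. (g ^^ n) 0) \<longlonglongrightarrow> L" and "g L = L" and "L \<in> {0..1}"
    and "\<And>n. (g ^^ n) 0 \<le> L"
    and "\<And>s. s \<in> {0..1} \<Longrightarrow> g s \<le> s \<Longrightarrow> L \<le> s"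
proof -
  define x where "x n = (g ^^ n) 0" for n
  have x_in: "x n \<in> {0..1}" for n
    unfolding x_def using maps by (intro funpow_in_invariant) auto
  have x_Suc: "x (Suc n) = g (x n)" for n
    unfolding x_def by simp
  have "x n \<le> x (Suc n)" for n
  proof (induction n)
    case 0
    then show ?case
      using x_in[of 1] by (simp add: x_def)
  next
    case (Suc n)
    then show ?case
      using x_in[of n] x_in[of "Suc n"] mono_onD[OF mono, of "x n" "x (Suc n)"]
      by (simp add: x_Suc)
  qed
  then have "incseq x"
    by (rule incseq_SucI)
  moreover have "bdd_above (range x)"
    using x_in by (auto intro: bdd_aboveI[of _ 1])
  ultimately have "convergent x"
    using LIMSEQ_incseq_SUP convergent_def by blast
  then have x_lim: "x \<longlonglongrightarrow> L"
    unfolding L_def x_def[abs_def] by (rule convergent_LIMSEQ_iff[THEN iffD1])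
  then show "(\<lambda>n. (g ^^ n) 0) \<longlonglongrightarrow> L"
    by (simp add: x_def[abs_def])
  show L_in: "L \<in> {0..1}"
    using x_in by (intro closed_sequentially[OF closed_atLeastAtMost _ x_lim]) auto
  have "(\<lambda>n. g (x n)) \<longlonglongrightarrow> g L"
    using x_in L_in by (intro continuous_on_tendsto_compose[OF cont x_lim]) auto
  moreover have "(\<lambda>n. g (x n)) \<longlonglongrightarrow> L"
    using LIMSEQ_Suc[OF x_lim] by (simp add: x_Suc)
  ultimately show "g L = L"
    by (rule LIMSEQ_unique)
  show "(g ^^ n) 0 \<le> L" for n
    using incseq_le[OF \<open>incseq x\<close> x_lim] by (simp add: x_def)
  show "L \<le> s" if s: "s \<in> {0..1}" "g s \<le> s" for s
  proof -
    have "x n \<le> s" for n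
    proof (induction n)
      case 0
      then show ?case
        using s by (simp add: x_def)
    next
      case (Suc n)
      then show ?case
        using x_in[of n] s mono_onD[OF mono, of "x n" s] by (simp add: x_Suc)
    qed
    then show ?thesis
      by (intro LIMSEQ_le_const2[OF x_lim]) auto
  qed
qed

lemma power_below_chord:
  fixes L s :: real
  assumes "0 \<le> L" "L < s" "s < 1"
  shows "(1 - L) * (s ^ k - L ^ k) \<le> (s - L) * (1 - L ^ k)"
    and "2 \<le> k \<Longrightarrow> (1 - L) * (s ^ k - L ^ k) < (s - L) * (1 - L ^ k)"
proof -
  have pos: "0 < (1 - L) * (s - L)"
    using assms by simp
  have "(1 - L) * (s ^ k - L ^ k) \<le> (s - L) * (1 - L ^ k) \<and>
      (2 \<le> k \<longrightarrow> (1 - L) * (s ^ k - L ^ k) < (s - L) * (1 - L ^ k))"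
  proof (cases k)
    case 0
    then show ?thesis
      by simp
  next
    case (Suc m)
    define A where "A = (\<Sum>p<Suc m. s ^ p * L ^ (m - p))"
    define B where "B = (\<Sum>p<Suc m. (1::real) ^ p * L ^ (m - p))"
    have lhs: "(1 - L) * (s ^ k - L ^ k) = ((1 - L) * (s - L)) * A"
      unfolding A_def Suc diff_power_eq_sum by simp
    have rhs: "(s - L) * (1 - L ^ k) = ((1 - L) * (s - L)) * B"
      unfolding B_def Suc using diff_power_eq_sum[of 1 m L] by simp
    have terms_le: "\<forall>p\<in>{..<Suc m}. s ^ p * L ^ (m - p) \<le> 1 ^ p * L ^ (m - p)"
      using assms by (auto intro!: mult_left_le_one_le power_le_one)
    have "A \<le> B"
      unfolding A_def B_def by (rule sum_mono) (use terms_le in blast)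
    moreover have "A < B" if "2 \<le> k"
      unfolding A_def B_def
    proof (rule sum_strict_mono_ex1[OF _ terms_le])
      have "s ^ m < 1"
        using assms that Suc by (simp add: power_less_one_iff)
      then show "\<exists>p\<in>{..<Suc m}. s ^ p * L ^ (m - p) < 1 ^ p * L ^ (m - p)"
        by (intro bexI[of _ m]) auto
    qed simp
    ultimately show ?thesis
      unfolding lhs rhs using pos by (auto intro: mult_left_mono mult_strict_left_mono)
  qed
  then show "(1 - L) * (s ^ k - L ^ k) \<le> (s - L) * (1 - L ^ k)"
    and "2 \<le> k \<Longrightarrow> (1 - L) * (s ^ k - L ^ k) < (s - L) * (1 - L ^ k)"
    by auto
qed

lemma pseries_below_chord:
  assumes nonneg: "\<And>k. 0 \<le> b k" and "summable b" and "2 \<le> m" "0 < b m"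
    and L: "0 \<le> L" "L < s" "s < 1"
  shows "(1 - L) * (pseries b s - pseries b L) < (s - L) * (pseries b 1 - pseries b L)"
proof -
  have sums: "(\<lambda>k. b k * x ^ k) sums pseries b x" if "x \<in> {0..1}" for x
  proof -
    have "norm (b k * x ^ k) \<le> b k" for k
      using nonneg[of k] that by (simp add: abs_mult mult_left_le power_le_one)
    then have "summable (\<lambda>k. b k * x ^ k)"
      by (intro summable_comparison_test[OF _ \<open>summable b\<close>]) auto
    then show ?thesis
      unfolding pseries_def by (rule summable_sums)
  qed
  define d where
    "d k = (s - L) * (b k * 1 ^ k - b k * L ^ k) - (1 - L) * (b k * s ^ k - b k * L ^ k)" for k
  have d_sums:
    "d sums ((s - L) * (pseries b 1 - pseries b L) - (1 - L) * (pseries b s - pseries b L))"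
    unfolding d_def using L by (intro sums_diff sums_mult sums) auto
  have "d k = b k * ((s - L) * (1 - L ^ k) - (1 - L) * (s ^ k - L ^ k))" for k
    unfolding d_def by (simp add: algebra_simps)
  then have "0 \<le> d k" "0 < d m" for k
    using nonneg power_below_chord[OF L] \<open>2 \<le> m\<close> \<open>0 < b m\<close> by simp_all
  then have "0 < suminf d"
    by (intro suminf_pos2[OF sums_summable[OF d_sums]]) auto
  then show ?thesis
    using sums_unique[OF d_sums] by simp
qed

definition khinchin_pgf :: "(nat \<Rightarrow> real) \<Rightarrow> real \<Rightarrow> real \<Rightarrow> real" where
  "khinchin_pgf a t s = pseries a (t * s) / pseries a t"

lemma sums_khinchin_weights:
  assumes "ereal \<bar>t * s\<bar> < conv_radius a"
  shows "(\<lambda>n. a n * t ^ n / pseries a t * s ^ n) sums khinchin_pgf a t s"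
proof -
  have "(\<lambda>n. a n * (t * s) ^ n) sums pseries a (t * s)"
    unfolding pseries_def using summable_in_conv_radius[of "t * s" a] assms
    by (simp add: summable_sums)
  then show ?thesis
    unfolding khinchin_pgf_def
    using sums_divide[of _ "pseries a (t * s)" "pseries a t"]
    by (simp add: power_mult_distrib field_simps)
qed

locale khinchin_series =
  fixes a :: "nat \<Rightarrow> real"
  assumes nonneg: "\<And>n. 0 \<le> a n" and const_pos: "0 < a 0"
begin

lemma pseries_pos:
  assumes "0 \<le> t" "ereal t < conv_radius a"
  shows "0 < pseries a t"
  using pseries_mono[of a 0 t] nonneg assms const_pos by simp

lemma khinchin_pgf_in_unit_interval:
  assumes t: "0 \<le> t" "ereal t < conv_radius a" and s: "s \<in> {0..1}"
  shows "khinchin_pgf a t s \<in> {0..1}"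
proof -
  have "ereal (t * s) < conv_radius a"
    using abs_mult_less_conv_radius[OF t s] t s by simp
  then have "0 < pseries a (t * s)"
    using t s by (intro pseries_pos) auto
  moreover have "pseries a (t * s) \<le> pseries a t"
    using t s nonneg by (intro pseries_mono) (auto simp: mult_left_le)
  ultimately show ?thesis
    unfolding khinchin_pgf_def using pseries_pos[OF t] by simp
qed

lemma mono_on_khinchin_pgf:
  assumes t: "0 \<le> t" "ereal t < conv_radius a"
  shows "mono_on {0..1} (khinchin_pgf a t)"
proof (rule mono_onI)
  fix x y :: real
  assume "x \<in> {0..1}" "y \<in> {0..1}" "x \<le> y"
  then have "pseries a (t * x) \<le> pseries a (t * y)"
    using t nonneg abs_mult_less_conv_radius[OF t, of y]
    by (intro pseries_mono) (auto intro: mult_left_mono)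
  then show "khinchin_pgf a t x \<le> khinchin_pgf a t y"
    unfolding khinchin_pgf_def using pseries_pos[OF t] by (simp add: divide_right_mono)
qed

lemma continuous_on_khinchin_pgf:
  assumes t: "0 \<le> t" "ereal t < conv_radius a"
  shows "continuous_on {0..1} (khinchin_pgf a t)"
proof -
  have "continuous_on {0..1} (\<lambda>s. pseries a (t * s))"
    using abs_mult_less_conv_radius[OF t]
    by (intro continuous_on_compose2[OF continuous_on_pseries] continuous_intros) auto
  then show ?thesis
    unfolding khinchin_pgf_def[abs_def] using pseries_pos[OF t]
    by (intro continuous_intros) auto
qed

lemma continuous_on_khinchin_pgf_comp:
  assumes "continuous_on {t. 0 \<le> t \<and> ereal t < conv_radius a} h"
    and "\<And>t. 0 \<le> t \<Longrightarrow> ereal t < conv_radius a \<Longrightarrow> h t \<in> {0..1}"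
  shows "continuous_on {t. 0 \<le> t \<and> ereal t < conv_radius a} (\<lambda>t. khinchin_pgf a t (h t))"
proof -
  let ?I = "{t. 0 \<le> t \<and> ereal t < conv_radius a}"
  have "continuous_on ?I (\<lambda>t. pseries a (t * h t))"
  proof (rule continuous_on_compose2[OF continuous_on_pseries])
    show "continuous_on ?I (\<lambda>t. t * h t)"
      using assms(1) by (intro continuous_intros)
    show "(\<lambda>t. t * h t) ` ?I \<subseteq> {x. ereal \<bar>x\<bar> < conv_radius a}"
      using assms(2) abs_mult_less_conv_radius by blast
  qed
  moreover have "continuous_on ?I (pseries a)"
    by (rule continuous_on_subset[OF continuous_on_pseries]) auto
  ultimately show ?thesis
    unfolding khinchin_pgf_def using pseries_pos by (intro continuous_on_divide) force+
qed

lemma continuous_on_khinchin_pgf_funpow: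
  "continuous_on {t. 0 \<le> t \<and> ereal t < conv_radius a} (\<lambda>t. (khinchin_pgf a t ^^ n) 0)"
proof (induction n)
  case 0
  then show ?case
    by (simp add: continuous_on_const)
next
  case (Suc n)
  have "(khinchin_pgf a t ^^ n) 0 \<in> {0..1}" if "0 \<le> t" "ereal t < conv_radius a" for t
    using khinchin_pgf_in_unit_interval[OF that] by (intro funpow_in_invariant) auto
  then show ?case
    using continuous_on_khinchin_pgf_comp[OF Suc.IH] by simp
qed

lemma pmf_khinchin:
  assumes "0 \<le> t" "ereal t < conv_radius a"
  shows "pmf (khinchin a t) n = a n * t ^ n / pseries a t"
proof -
  have weights_nonneg: "0 \<le> a n * t ^ n / pseries a t" for n
    using nonneg assms pseries_pos[OF assms] by simp
  have "(\<lambda>n. a n * t ^ n / pseries a t) sums 1"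
    using sums_khinchin_weights[of t 1 a] assms pseries_pos[OF assms]
    by (simp add: khinchin_pgf_def)
  then have "(\<integral>\<^sup>+ n. ennreal (a n * t ^ n / pseries a t) \<partial>count_space UNIV) = 1"
    using suminf_ennreal_eq[OF weights_nonneg] by (simp add: nn_integral_count_space_nat)
  then show ?thesis
    unfolding khinchin_def using weights_nonneg by (intro pmf_embed_pmf) auto
qed

lemma pgf_khinchin:
  assumes t: "0 \<le> t" "ereal t < conv_radius a" and s: "s \<in> {0..1}"
  shows "pgf (khinchin a t) s = khinchin_pgf a t s"
proof -
  have terms_nonneg: "0 \<le> a n * t ^ n / pseries a t * s ^ n" for n
    using nonneg t s pseries_pos[OF t] by simp
  have "(\<integral>\<^sup>+ n. ennreal (s ^ n) \<partial>measure_pmf (khinchin a t))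
      = (\<Sum>n. ennreal (pmf (khinchin a t) n) * ennreal (s ^ n))"
    by (simp add: nn_integral_measure_pmf nn_integral_count_space_nat)
  also have "\<dots> = (\<Sum>n. ennreal (a n * t ^ n / pseries a t * s ^ n))"
    using s by (intro suminf_cong)
      (simp only: pmf_khinchin[OF t] ennreal_mult'' zero_le_power atLeastAtMost_iff)
  also have "\<dots> = ennreal (khinchin_pgf a t s)"
    using terms_nonneg sums_khinchin_weights[OF abs_mult_less_conv_radius[OF t s]]
    by (rule suminf_ennreal_eq)
  finally show ?thesis
    using nn_integral_power_eq_pgf[OF s] khinchin_pgf_in_unit_interval[OF t s]
    by (simp add: ennreal_inj)
qed

lemma extinction_prob_khinchin_eq_lim:
  assumes t: "0 \<le> t" "ereal t < conv_radius a"
  shows "extinction_prob (khinchin a t) = lim (\<lambda>n. (khinchin_pgf a t ^^ n) 0)"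
proof -
  have "(pgf (khinchin a t) ^^ n) 0 = (khinchin_pgf a t ^^ n) 0" for n
    using pgf_khinchin[OF t] khinchin_pgf_in_unit_interval[OF t]
    by (intro funpow_cong_on_invariant[where S = "{0..1}"]) auto
  then show ?thesis
    unfolding extinction_prob_eq_lim_pgf by simp
qed

lemma extinction_prob_khinchin:
  assumes t: "0 \<le> t" "ereal t < conv_radius a"
  defines "q \<equiv> extinction_prob (khinchin a t)"
  shows "(\<lambda>n. (khinchin_pgf a t ^^ n) 0) \<longlonglongrightarrow> q" and "khinchin_pgf a t q = q"
    and "q \<in> {0..1}" and "\<And>n. (khinchin_pgf a t ^^ n) 0 \<le> q"
    and "\<And>s. s \<in> {0..1} \<Longrightarrow> khinchin_pgf a t s \<le> s \<Longrightarrow> q \<le> s"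
proof -
  have "khinchin_pgf a t ` {0..1} \<subseteq> {0..1}"
    using khinchin_pgf_in_unit_interval[OF t] by auto
  note fixpoint = funpow_zero_tendsto_least_fixpoint[OF mono_on_khinchin_pgf[OF t] this
      continuous_on_khinchin_pgf[OF t], folded extinction_prob_khinchin_eq_lim[OF t] q_def]
  show "(\<lambda>n. (khinchin_pgf a t ^^ n) 0) \<longlonglongrightarrow> q" "khinchin_pgf a t q = q" "q \<in> {0..1}"
    "(khinchin_pgf a t ^^ n) 0 \<le> q" for n
    by (fact fixpoint)+
  show "q \<le> s" if "s \<in> {0..1}" "khinchin_pgf a t s \<le> s" for s
    using fixpoint(5) that .
qed

lemma extinction_prob_khinchin_zero:
  assumes "0 < conv_radius a"
  shows "extinction_prob (khinchin a 0) = 1"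
proof -
  have "khinchin_pgf a 0 s = 1" for s
    using const_pos by (simp add: khinchin_pgf_def)
  then show ?thesis
    using extinction_prob_khinchin(2)[of 0] assms by (simp add: zero_ereal_def)
qed

lemma khinchin_pgf_below_diagonal:
  assumes t: "0 \<le> t" "ereal t < conv_radius a" and L: "0 \<le> L" "L < s" "s < 1"
    and fixed: "khinchin_pgf a t L = L"
  shows "khinchin_pgf a t s < s"
proof -
  define b where "b k = a k * t ^ k / pseries a t" for k
  have pseries_b: "pseries b x = khinchin_pgf a t x" if "x \<in> {0..1}" for x
    using sums_khinchin_weights[OF abs_mult_less_conv_radius[OF t that]]
    unfolding pseries_def b_def by (simp add: sums_iff)
  have b_nonneg: "0 \<le> b k" for k
    unfolding b_def using nonneg t pseries_pos[OF t] by simp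
  have "summable b"
    using sums_khinchin_weights[OF abs_mult_less_conv_radius[OF t, of 1]]
    unfolding b_def by (simp add: sums_iff)
  have one: "pseries b 1 = 1"
    using pseries_b[of 1] pseries_pos[OF t] by (simp add: khinchin_pgf_def)
  have "\<exists>m. 2 \<le> m \<and> 0 < b m"
  proof (rule ccontr)
    assume "\<nexists>m. 2 \<le> m \<and> 0 < b m"
    then have "b k = 0" if "2 \<le> k" for k
      using that b_nonneg[of k] by force
    then have affine: "pseries b x = b 0 + b 1 * x" for x
      unfolding pseries_def by (subst suminf_finite[of "{..<2}"]) (auto simp: numeral_2_eq_2)
    have "b 0 * (1 - L) = (b 0 + b 1 * L) - L * (b 0 + b 1)"
      by (simp add: algebra_simps)
    also have "\<dots> = 0"
      using affine[of 1, symmetric] affine[of L, symmetric] one pseries_b[of L] fixed L by simp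
    finally have "b 0 * (1 - L) = 0" .
    moreover have "0 < b 0"
      unfolding b_def using const_pos pseries_pos[OF t] by simp
    ultimately show False
      using L by simp
  qed
  then obtain m where m: "2 \<le> m" "0 < b m"
    by blast
  have "(1 - L) * (pseries b s - pseries b L) < (s - L) * (pseries b 1 - pseries b L)"
    using pseries_below_chord[OF b_nonneg \<open>summable b\<close> m L] .
  then have "(1 - L) * (khinchin_pgf a t s - L) < (1 - L) * (s - L)"
    using pseries_b[of s] pseries_b[of L] one fixed L by simp
  then show ?thesis
    using L by simp
qed

lemma eventually_less_extinction_prob_khinchin:
  assumes t0: "t0 \<in> {t. 0 \<le> t \<and> ereal t < conv_radius a}"
    and l: "l < extinction_prob (khinchin a t0)"
  shows "\<forall>\<^sub>F t in at t0 within {t. 0 \<le> t \<and> ereal t < conv_radius a}.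
    l < extinction_prob (khinchin a t)"
proof -
  let ?I = "{t. 0 \<le> t \<and> ereal t < conv_radius a}"
  obtain n where n: "l < (khinchin_pgf a t0 ^^ n) 0"
    using extinction_prob_khinchin(1)[of t0] t0 l
    unfolding order_tendsto_iff eventually_sequentially by force
  have "\<forall>\<^sub>F t in at t0 within ?I. l < (khinchin_pgf a t ^^ n) 0"
    using continuous_on_khinchin_pgf_funpow[of n] t0 n
    unfolding continuous_on_def order_tendsto_iff by blast
  moreover have "\<forall>\<^sub>F t in at t0 within ?I. t \<in> ?I"
    by (simp add: eventually_at_filter)
  ultimately show ?thesis
  proof eventually_elim
    case (elim t)
    then show ?case
      using extinction_prob_khinchin(4)[of t n] by simp
  qed
qed

lemma eventually_extinction_prob_khinchin_less:
  assumes t0: "t0 \<in> {t. 0 \<le> t \<and> ereal t < conv_radius a}"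
    and u: "extinction_prob (khinchin a t0) < u"
  shows "\<forall>\<^sub>F t in at t0 within {t. 0 \<le> t \<and> ereal t < conv_radius a}.
    extinction_prob (khinchin a t) < u"
proof -
  let ?I = "{t. 0 \<le> t \<and> ereal t < conv_radius a}"
  let ?q = "\<lambda>t. extinction_prob (khinchin a t)"
  have in_I: "\<forall>\<^sub>F t in at t0 within ?I. t \<in> ?I"
    by (simp add: eventually_at_filter)
  show ?thesis
  proof (cases "1 < u")
    case True
    show ?thesis
      using in_I by eventually_elim (use True extinction_prob_khinchin(3) in force)
  next
    case False
    define s where "s = (?q t0 + u) / 2"
    have s: "?q t0 < s" "s < u" "s < 1" "0 \<le> ?q t0"
      using u False extinction_prob_khinchin(3)[of t0] t0 unfolding s_def by auto
    have "khinchin_pgf a t0 s < s"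
      using t0 s extinction_prob_khinchin(2)[of t0] by (intro khinchin_pgf_below_diagonal) auto
    moreover have "continuous_on ?I (\<lambda>t. khinchin_pgf a t s)"
      using continuous_on_khinchin_pgf_comp[of "\<lambda>_. s"] s by (simp add: continuous_on_const)
    ultimately have "\<forall>\<^sub>F t in at t0 within ?I. khinchin_pgf a t s < s"
      using t0 unfolding continuous_on_def order_tendsto_iff by blast
    then show ?thesis
      using in_I
    proof eventually_elim
      case (elim t)
      then have "?q t \<le> s"
        using s by (intro extinction_prob_khinchin(5)) auto
      then show ?case
        using s by simp
    qed
  qed
qed

lemma continuous_on_extinction_prob_khinchin:
  "continuous_on {t. 0 \<le> t \<and> ereal t < conv_radius a} (\<lambda>t. extinction_prob (khinchin a t))"
  unfolding continuous_on_def order_tendsto_iff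
  using eventually_less_extinction_prob_khinchin eventually_extinction_prob_khinchin_less by blast

end

theorem proposition6p5:
  fixes \<psi> :: "nat \<Rightarrow> real" and q :: "real \<Rightarrow> real"
  assumes "in_class_K \<psi>"
    and "\<And>t. q t = (if t = 0 then 1 else extinction_prob (khinchin \<psi> t))"
  shows "continuous_on {t. 0 \<le> t \<and> ereal t < conv_radius \<psi>} q"
proof -
  interpret khinchin_series \<psi>
    using assms(1) by unfold_locales (auto simp: in_class_K_def)
  have "q t = extinction_prob (khinchin \<psi> t)" for t
    using assms extinction_prob_khinchin_zero by (simp add: in_class_K_def)
  then show ?thesis
    using continuous_on_extinction_prob_khinchin by simp
qed

end
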